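(* Let $K:X\times X\to\mathbb{C}$ be positive definite and assume that the matrix $K_F=(K(y,z))_{y,z\in F}$ is invertible for every finite $F\subset X$. Let $x\in X$. Then $\delta_x\in\mathscr{H}(K)$ if and only if $\sup\{(K_F^{-1})_{x,x}: F\subset X\text{ finite},\ x\in F\}<\infty$, and in that case $\|\delta_x\|^2_{\mathscr{H}(K)}$ equals this supremum.
   Context: $\delta_x$ is the function on $X$ equal to $1$ at $x$ and $0$ elsewhere; $\mathscr{H}(K)$ is the reproducing kernel Hilbert space of $K$ (completion of span of $K(\cdot,x)$ with $\langle K(\cdot,x),K(\cdot,y)\rangle=K(x,y)$, reproducing property $\langle K(\cdot,x),h\rangle=h(x)$). *)

theory Defs
  imports Complex_Main
begin

text \<open>A finite linear combination \<Sum>x\<in>S. c x K(\<cdot>,x) is represented by a finite set S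
and coefficients c (only values on S matter).\<close>

definition qform :: "('a \<Rightarrow> 'a \<Rightarrow> complex) \<Rightarrow> 'a set \<Rightarrow> ('a \<Rightarrow> complex) \<Rightarrow> complex" where
  "qform K S c = (\<Sum>x\<in>S. \<Sum>y\<in>S. cnj (c x) * c y * K x y)"

definition pos_def_kernel :: "('a \<Rightarrow> 'a \<Rightarrow> complex) \<Rightarrow> bool" where
  "pos_def_kernel K \<longleftrightarrow> (\<forall>S c. finite S \<longrightarrow> Im (qform K S c) = 0 \<and> Re (qform K S c) \<ge> 0)"

definition kfun :: "('a \<Rightarrow> 'a \<Rightarrow> complex) \<Rightarrow> 'a set \<Rightarrow> ('a \<Rightarrow> complex) \<Rightarrow> 'a \<Rightarrow> complex" where
  "kfun K S c = (\<lambda>y. \<Sum>x\<in>S. c x * K y x)"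

definition restr :: "'a set \<Rightarrow> ('a \<Rightarrow> complex) \<Rightarrow> 'a \<Rightarrow> complex" where
  "restr S c = (\<lambda>x. if x \<in> S then c x else 0)"

definition diff_norm2 :: "('a \<Rightarrow> 'a \<Rightarrow> complex) \<Rightarrow> 'a set \<Rightarrow> ('a \<Rightarrow> complex) \<Rightarrow> 'a set \<Rightarrow> ('a \<Rightarrow> complex) \<Rightarrow> real" where
  "diff_norm2 K S c T d = Re (qform K (S \<union> T) (\<lambda>x. restr S c x - restr T d x))"

text \<open>The completion H(K) is realised as the set of such
pointwise limits (standard realisation of the completion as functions on X).\<close>
definition approx_seq :: "('a \<Rightarrow> 'a \<Rightarrow> complex) \<Rightarrow> ('a \<Rightarrow> complex) \<Rightarrow> (nat \<Rightarrow> 'a set) \<Rightarrow> (nat \<Rightarrow> 'a \<Rightarrow> complex) \<Rightarrow> bool" where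
  "approx_seq K f S c \<longleftrightarrow> (\<forall>n. finite (S n)) \<and>
     (\<forall>e>0. \<exists>N. \<forall>m\<ge>N. \<forall>n\<ge>N. diff_norm2 K (S m) (c m) (S n) (c n) < e) \<and>
     (\<forall>y. (\<lambda>n. kfun K (S n) (c n) y) \<longlonglongrightarrow> f y)"

definition in_RKHS :: "('a \<Rightarrow> 'a \<Rightarrow> complex) \<Rightarrow> ('a \<Rightarrow> complex) \<Rightarrow> bool" where
  "in_RKHS K f \<longleftrightarrow> (\<exists>S c. approx_seq K f S c)"

definition RKHS_norm2 :: "('a \<Rightarrow> 'a \<Rightarrow> complex) \<Rightarrow> ('a \<Rightarrow> complex) \<Rightarrow> real" where
  "RKHS_norm2 K f = (SOME r. \<exists>S c. approx_seq K f S c \<and> (\<lambda>n. Re (qform K (S n) (c n))) \<longlonglongrightarrow> r)"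

definition delta :: "'a \<Rightarrow> 'a \<Rightarrow> complex" where
  "delta x = (\<lambda>y. if y = x then 1 else 0)"

definition is_inv_on :: "('a \<Rightarrow> 'a \<Rightarrow> complex) \<Rightarrow> 'a set \<Rightarrow> ('a \<Rightarrow> 'a \<Rightarrow> complex) \<Rightarrow> bool" where
  "is_inv_on K F M \<longleftrightarrow>
     (\<forall>y\<in>F. \<forall>w\<in>F. (\<Sum>z\<in>F. K y z * M z w) = (if y = w then 1 else 0)) \<and>
     (\<forall>y\<in>F. \<forall>w\<in>F. (\<Sum>z\<in>F. M y z * K z w) = (if y = w then 1 else 0))"

definition Kmat_invertible :: "('a \<Rightarrow> 'a \<Rightarrow> complex) \<Rightarrow> 'a set \<Rightarrow> bool" where
  "Kmat_invertible K F \<longleftrightarrow> (\<exists>M. is_inv_on K F M)"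

definition Kinv :: "('a \<Rightarrow> 'a \<Rightarrow> complex) \<Rightarrow> 'a set \<Rightarrow> 'a \<Rightarrow> 'a \<Rightarrow> complex" where
  "Kinv K F = (SOME M. is_inv_on K F M)"

end

theory Submission
  imports Defs
begin

text \<open>
  For finite F containing x, let g_F be the combination of the K(-,y), y in F, with coefficient
  vector the x-th column of K_F^-1. It represents evaluation at x on span {K(-,y) | y in F}:
  <g_F, h> = h(x) there, and |g_F|^2 = (K_F^-1)_xx. Consequently (K_F^-1)_xx increases with F and
  |g_G - g_F|^2 = (K_G^-1)_xx - (K_F^-1)_xx for F contained in G.

  If these diagonal entries are bounded by s, then along increasing F_n with (K_F_n^-1)_xx tending
  to s the g_F_n form a Cauchy sequence, and |g_F(y) - delta_x(y)|^2 <= (s - (K_F^-1)_xx) K(y,y)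
  shows that they converge pointwise to delta_x. Conversely, if finite combinations f_n converge
  to delta_x in the sense of H(K), then <g_F, f_n> tends to (K_F^-1)_xx, so
  0 <= |f_n - g_F|^2 forces the limit inferior of |f_n|^2 to be at least (K_F^-1)_xx; and pairing
  f_m with g_F for F containing the support of f_m and x bounds |f_m|^2 by (sqrt s + sqrt e)^2
  once the sequence is e-Cauchy from m on. So |f_n|^2 tends to the supremum along every
  approximating sequence.
\<close>

lemma le_power2_if_le_sqrt_mult:
  fixes q M :: real
  assumes "q \<le> sqrt q * M"
  shows "q \<le> M\<^sup>2"
proof (cases "q > 0")
  case True
  then have "sqrt q * sqrt q \<le> sqrt q * M"
    using assms by simp
  moreover have "0 < sqrt q"
    using True by simp
  ultimately have "sqrt q \<le> M"
    by (rule mult_left_le_imp_le)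
  then show ?thesis
    using True power_mono[of "sqrt q" M 2] by simp
next
  case False
  then show ?thesis
    using zero_le_power2[of M] by linarith
qed

lemma le_mult_if_quadratic_nonneg:
  fixes p q B :: real
  assumes "\<And>t. 0 \<le> p - 2 * t * B + t\<^sup>2 * B * q" "0 \<le> q"
  shows "B \<le> p * q"
proof (cases "q = 0")
  case True
  have "B \<le> 0"
  proof (rule ccontr)
    assume "\<not> B \<le> 0"
    then have "p - 2 * ((p + 1) / (2 * B)) * B = -1"
      by (simp add: field_simps)
    then show False
      using assms(1)[of "(p + 1) / (2 * B)"] True by simp
  qed
  then show ?thesis
    using True by simp
next
  case False
  then have "q > 0"
    using assms(2) by simp
  have "p - 2 * (1 / q) * B + (1 / q)\<^sup>2 * B * q = p - B / q"
    using \<open>q > 0\<close> by (simp add: field_simps power2_eq_square)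
  then have "B / q \<le> p"
    using assms(1)[of "1 / q"] by simp
  then show ?thesis
    using \<open>q > 0\<close> by (simp add: field_simps)
qed

text \<open>The H(K) inner product of the combinations with coefficients u and v supported in U,
  conjugate-linear in the first argument.\<close>

definition gram_form ::
    "('a \<Rightarrow> 'a \<Rightarrow> complex) \<Rightarrow> 'a set \<Rightarrow> ('a \<Rightarrow> complex) \<Rightarrow> ('a \<Rightarrow> complex) \<Rightarrow> complex" where
  "gram_form K U u v = (\<Sum>x\<in>U. \<Sum>y\<in>U. cnj (u x) * v y * K x y)"

definition vanishes_outside :: "'a set \<Rightarrow> ('a \<Rightarrow> complex) \<Rightarrow> bool" where
  "vanishes_outside U u \<longleftrightarrow> (\<forall>z. z \<notin> U \<longrightarrow> u z = 0)"

lemma vanishes_outside_restr [simp]: "vanishes_outside S (restr S c)"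
  by (simp add: vanishes_outside_def restr_def)

lemma qform_eq_gram_form: "qform K S c = gram_form K S (restr S c) (restr S c)"
  unfolding qform_def gram_form_def restr_def by (intro sum.cong refl) simp

lemma gram_form_self: "gram_form K U u u = qform K U u"
  by (simp add: gram_form_def qform_def)

lemma kfun_restr: "kfun K S (restr S c) = kfun K S c"
  unfolding kfun_def restr_def by (intro ext sum.cong refl) simp

lemma kfun_diff: "kfun K U (\<lambda>z. u z - v z) y = kfun K U u y - kfun K U v y"
  by (simp add: kfun_def sum_subtractf algebra_simps)

lemma gram_form_eq_sum_kfun: "gram_form K U u v = (\<Sum>y\<in>U. cnj (u y) * kfun K U v y)"
  by (simp add: gram_form_def kfun_def sum_distrib_left mult.commute mult.left_commute)

lemma kfun_superset:
  assumes "finite V" "U \<subseteq> V" "vanishes_outside U v"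
  shows "kfun K V v y = kfun K U v y"
  unfolding kfun_def
  by (rule sum.mono_neutral_right) (use assms in \<open>auto simp: vanishes_outside_def\<close>)

lemma gram_form_superset:
  assumes "finite V" "U \<subseteq> V" "vanishes_outside U u" "vanishes_outside U v"
  shows "gram_form K V u v = gram_form K U u v"
proof -
  have "gram_form K V u v = (\<Sum>y\<in>V. cnj (u y) * kfun K U v y)"
    using kfun_superset[OF assms(1,2,4)] by (simp add: gram_form_eq_sum_kfun)
  also have "\<dots> = (\<Sum>y\<in>U. cnj (u y) * kfun K U v y)"
    by (rule sum.mono_neutral_right) (use assms in \<open>auto simp: vanishes_outside_def\<close>)
  finally show ?thesis by (simp add: gram_form_eq_sum_kfun)
qed

lemma gram_form_restr_superset:
  assumes "finite U" "S \<subseteq> U"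
  shows "gram_form K U (restr S c) (restr S c) = qform K S c"
  using gram_form_superset[OF assms] by (simp add: qform_eq_gram_form)

lemma gram_form_restr_restr:
  assumes "finite S" "finite T"
  shows "gram_form K (S \<union> T) (restr S c) (restr T d) = (\<Sum>y\<in>S. cnj (c y) * kfun K T d y)"
proof -
  have "gram_form K (S \<union> T) (restr S c) (restr T d) = (\<Sum>y\<in>S \<union> T. cnj (restr S c y) * kfun K T d y)"
    using kfun_superset[of "S \<union> T" T "restr T d" K] assms
    by (simp add: gram_form_eq_sum_kfun kfun_restr)
  also have "\<dots> = (\<Sum>y\<in>S. cnj (restr S c y) * kfun K T d y)"
    by (rule sum.mono_neutral_right) (use assms in \<open>auto simp: restr_def\<close>)
  also have "\<dots> = (\<Sum>y\<in>S. cnj (c y) * kfun K T d y)"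
    by (simp add: restr_def)
  finally show ?thesis .
qed

lemma diff_norm2_eq_gram_form:
  "diff_norm2 K S c T d =
     Re (gram_form K (S \<union> T) (\<lambda>z. restr S c z - restr T d z) (\<lambda>z. restr S c z - restr T d z))"
  by (simp add: diff_norm2_def gram_form_self)

lemma gram_form_diff_right: "gram_form K U u (\<lambda>z. v z - w z) = gram_form K U u v - gram_form K U u w"
  by (simp add: gram_form_def sum_subtractf algebra_simps)

lemma gram_form_scale_left: "gram_form K U (\<lambda>z. a * u z) v = cnj a * gram_form K U u v"
  by (simp add: gram_form_def sum_distrib_left algebra_simps)

lemma gram_form_scale_right: "gram_form K U u (\<lambda>z. a * v z) = a * gram_form K U u v"
  by (simp add: gram_form_def sum_distrib_left algebra_simps)

lemma gram_form_diff_diff: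
  "gram_form K U (\<lambda>z. u z - v z) (\<lambda>z. u z - v z) =
     gram_form K U u u - gram_form K U u v - gram_form K U v u + gram_form K U v v"
proof -
  have "cnj (u x - v x) * (u y - v y) * K x y =
      cnj (u x) * u y * K x y - cnj (u x) * v y * K x y - cnj (v x) * u y * K x y
      + cnj (v x) * v y * K x y" for x y
    by (simp add: algebra_simps)
  then show ?thesis
    by (simp add: gram_form_def sum.distrib sum_subtractf)
qed

lemma gram_form_diff_commute:
  "gram_form K U (\<lambda>z. u z - v z) (\<lambda>z. u z - v z) = gram_form K U (\<lambda>z. v z - u z) (\<lambda>z. v z - u z)"
  by (simp add: gram_form_def algebra_simps)

lemma diff_norm2_commute: "diff_norm2 K S c T d = diff_norm2 K T d S c"
  by (simp add: diff_norm2_eq_gram_form Un_commute gram_form_diff_commute[of K _ "restr S c"])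

text \<open>Coefficients of the representer of evaluation at x on span {K(-,y) | y in F}.\<close>

definition eval_repr :: "('a \<Rightarrow> 'a \<Rightarrow> complex) \<Rightarrow> 'a set \<Rightarrow> 'a \<Rightarrow> 'a \<Rightarrow> complex" where
  "eval_repr K F x = restr F (\<lambda>z. Kinv K F z x)"

lemma is_inv_on_Kinv: "Kmat_invertible K F \<Longrightarrow> is_inv_on K F (Kinv K F)"
  unfolding Kinv_def Kmat_invertible_def by (metis someI_ex)

lemma vanishes_outside_eval_repr [simp]: "vanishes_outside F (eval_repr K F x)"
  by (simp add: eval_repr_def)

lemma restr_eval_repr [simp]: "restr F (eval_repr K F x) = eval_repr K F x"
  by (auto simp: eval_repr_def restr_def)

lemma kfun_eval_repr:
  assumes "Kmat_invertible K F" "x \<in> F" "y \<in> F"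
  shows "kfun K F (eval_repr K F x) y = delta x y"
proof -
  have "kfun K F (eval_repr K F x) y = (\<Sum>z\<in>F. K y z * Kinv K F z x)"
    unfolding kfun_def eval_repr_def restr_def by (intro sum.cong refl) (simp add: mult.commute)
  also have "\<dots> = delta x y"
    using is_inv_on_Kinv[OF assms(1)] assms(2,3) unfolding is_inv_on_def delta_def by auto
  finally show ?thesis .
qed

lemma gram_form_eval_repr:
  assumes "Kmat_invertible K F" "finite F" "x \<in> F"
  shows "gram_form K F u (eval_repr K F x) = cnj (u x)"
proof -
  have "gram_form K F u (eval_repr K F x) = (\<Sum>y\<in>F. if y = x then cnj (u y) else 0)"
    unfolding gram_form_eq_sum_kfun using kfun_eval_repr[OF assms(1,3)]
    by (intro sum.cong refl) (simp add: delta_def)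
  then show ?thesis using assms(2,3) by simp
qed

lemma gram_form_eval_repr_self:
  assumes "Kmat_invertible K F" "finite F" "x \<in> F"
  shows "gram_form K F (eval_repr K F x) (eval_repr K F x) = cnj (Kinv K F x x)"
  using gram_form_eval_repr[OF assms] assms(3) by (simp add: eval_repr_def restr_def)

lemma approx_seq_delta_gram_form_tendsto:
  assumes "approx_seq K (delta x) S c" "finite T"
  shows "(\<lambda>n. gram_form K (T \<union> S n) (restr T d) (restr (S n) (c n))) \<longlonglongrightarrow> cnj (restr T d x)"
proof -
  have fin: "finite (S n)" for n
    using assms(1) by (simp add: approx_seq_def)
  have "(\<lambda>n. \<Sum>y\<in>T. cnj (d y) * kfun K (S n) (c n) y) \<longlonglongrightarrow> (\<Sum>y\<in>T. cnj (d y) * delta x y)"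
    using assms(1) unfolding approx_seq_def by (intro tendsto_intros) auto
  also have "(\<Sum>y\<in>T. cnj (d y) * delta x y) = cnj (restr T d x)"
    using assms(2) by (simp add: delta_def restr_def if_distrib[of "\<lambda>c. _ * c"] cong: if_cong)
  finally show ?thesis
    using gram_form_restr_restr[OF assms(2) fin] by simp
qed

lemma RKHS_norm2_eqI:
  assumes "in_RKHS K f"
    and "\<And>S c. approx_seq K f S c \<Longrightarrow> (\<lambda>n. Re (qform K (S n) (c n))) \<longlonglongrightarrow> r"
  shows "RKHS_norm2 K f = r"
  unfolding RKHS_norm2_def
proof (rule some_equality)
  obtain S c where "approx_seq K f S c"
    using assms(1) unfolding in_RKHS_def by blast
  then show "\<exists>S c. approx_seq K f S c \<and> (\<lambda>n. Re (qform K (S n) (c n))) \<longlonglongrightarrow> r"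
    using assms(2) by blast
  show "r' = r" if "\<exists>S c. approx_seq K f S c \<and> (\<lambda>n. Re (qform K (S n) (c n))) \<longlonglongrightarrow> r'" for r'
    using that assms(2) LIMSEQ_unique by blast
qed

locale pd_kernel =
  fixes K :: "'a \<Rightarrow> 'a \<Rightarrow> complex"
  assumes pos_def: "pos_def_kernel K"
begin

lemma qform_real: "finite S \<Longrightarrow> Im (qform K S c) = 0"
  and qform_nonneg: "finite S \<Longrightarrow> 0 \<le> Re (qform K S c)"
  using pos_def by (simp_all add: pos_def_kernel_def)

lemma gram_form_self_real: "finite U \<Longrightarrow> gram_form K U u u = of_real (Re (gram_form K U u u))"
  using qform_real by (simp add: gram_form_self complex_eq_iff)

lemma gram_form_self_nonneg: "finite U \<Longrightarrow> 0 \<le> Re (gram_form K U u u)"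
  using qform_nonneg by (simp add: gram_form_self)

lemma diag_real: "Im (K y y) = 0"
  using qform_real[of "{y}" "\<lambda>_. 1"] by (simp add: qform_def)

lemma diag_nonneg: "0 \<le> Re (K y y)"
  using qform_nonneg[of "{y}" "\<lambda>_. 1"] by (simp add: qform_def)

lemma hermitian: "K y x = cnj (K x y)"
proof (cases "x = y")
  case True
  then show ?thesis using diag_real[of x] by (simp add: complex_eq_iff)
next
  case False
  \<comment> \<open>Test the realness of the quadratic form on \<open>{x, y}\<close> with coefficients \<open>(1, 1)\<close>
    and \<open>(1, \<i>)\<close>.\<close>
  have "Im (qform K {x, y} (\<lambda>_. 1)) = 0" "Im (qform K {x, y} (\<lambda>z. if z = x then 1 else \<i>)) = 0"
    by (simp_all add: qform_real)
  then have "Im (K x y) + Im (K y x) = 0" "Re (K x y) - Re (K y x) = 0"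
    using False diag_real[of x] diag_real[of y] by (simp_all add: qform_def)
  then show ?thesis by (simp add: complex_eq_iff)
qed

lemma gram_form_commute: "gram_form K U v u = cnj (gram_form K U u v)"
proof -
  have "gram_form K U v u = (\<Sum>x\<in>U. \<Sum>y\<in>U. cnj (v y) * u x * K y x)"
    unfolding gram_form_def by (rule sum.swap)
  also have "\<dots> = (\<Sum>x\<in>U. \<Sum>y\<in>U. cnj (cnj (u x) * v y * K x y))"
  proof (intro sum.cong refl)
    fix x y
    show "cnj (v y) * u x * K y x = cnj (cnj (u x) * v y * K x y)"
      using hermitian[of y x] by simp
  qed
  also have "\<dots> = cnj (gram_form K U u v)"
    by (simp add: gram_form_def)
  finally show ?thesis .
qed

lemma gram_form_Cauchy_Schwarz:
  assumes "finite U"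
  shows "(cmod (gram_form K U u v))\<^sup>2 \<le> Re (gram_form K U u u) * Re (gram_form K U v v)"
proof -
  define b where "b = gram_form K U u v"
  define p where "p = Re (gram_form K U u u)"
  define q where "q = Re (gram_form K U v v)"
  have "q \<ge> 0"
    unfolding q_def using gram_form_self_nonneg[OF assms] by auto
  have quadratic: "0 \<le> p - 2 * t * (cmod b)\<^sup>2 + t\<^sup>2 * (cmod b)\<^sup>2 * q" for t :: real
  proof -
    define a where "a = of_real t * cnj b"
    have "gram_form K U (\<lambda>z. u z - a * v z) (\<lambda>z. u z - a * v z)
        = gram_form K U u u - a * b - cnj a * cnj b + cnj a * a * of_real q"
      using gram_form_self_real[OF assms, of v]
      by (simp add: gram_form_diff_diff gram_form_scale_left gram_form_scale_right
          gram_form_commute[of U v u] b_def q_def)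
    also have "\<dots> = gram_form K U u u - of_real (2 * t * (cmod b)\<^sup>2) + of_real (t\<^sup>2 * (cmod b)\<^sup>2 * q)"
      using complex_norm_square[of b] by (simp add: a_def power2_eq_square algebra_simps)
    finally have "gram_form K U (\<lambda>z. u z - a * v z) (\<lambda>z. u z - a * v z)
        = gram_form K U u u - of_real (2 * t * (cmod b)\<^sup>2) + of_real (t\<^sup>2 * (cmod b)\<^sup>2 * q)" .
    then show ?thesis
      using gram_form_self_nonneg[OF assms, of "\<lambda>z. u z - a * v z"] by (simp add: p_def)
  qed
  show ?thesis
    using le_mult_if_quadratic_nonneg[OF quadratic \<open>q \<ge> 0\<close>] by (simp add: b_def p_def q_def)
qed

lemma gram_form_le_parallelogram:
  assumes "finite U"
  shows "Re (gram_form K U u u)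
    \<le> 2 * Re (gram_form K U v v) + 2 * Re (gram_form K U (\<lambda>z. u z - v z) (\<lambda>z. u z - v z))"
proof -
  have "gram_form K U (\<lambda>z. u z - 2 * v z) (\<lambda>z. u z - 2 * v z)
      = 2 * gram_form K U v v + 2 * gram_form K U (\<lambda>z. u z - v z) (\<lambda>z. u z - v z) - gram_form K U u u"
    by (simp add: gram_form_diff_diff gram_form_scale_left gram_form_scale_right)
  then show ?thesis
    using gram_form_self_nonneg[OF assms, of "\<lambda>z. u z - 2 * v z"] by simp
qed

lemma kfun_point_bound:
  assumes "finite U" "y \<in> U"
  shows "(cmod (kfun K U u y))\<^sup>2 \<le> Re (gram_form K U u u) * Re (K y y)"
proof -
  have "gram_form K U (delta y) u = kfun K U u y" "gram_form K U (delta y) (delta y) = K y y"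
    using assms by (simp_all add: gram_form_eq_sum_kfun kfun_def delta_def if_distrib[of cnj]
        if_distrib[of "\<lambda>c. c * _"] cong: if_cong)
  then show ?thesis
    using gram_form_Cauchy_Schwarz[OF assms(1), of "delta y" u] by (simp add: mult.commute)
qed

lemma Kinv_diag_nonneg:
  assumes "Kmat_invertible K F" "finite F" "x \<in> F"
  shows "0 \<le> Re (Kinv K F x x)"
  using gram_form_self_nonneg[OF assms(2), of "eval_repr K F x"] gram_form_eval_repr_self[OF assms]
  by simp

lemma gram_form_eval_repr_diff:
  assumes "Kmat_invertible K F" "Kmat_invertible K G" "finite G" "F \<subseteq> G" "x \<in> F"
  shows "Re (gram_form K G (\<lambda>z. eval_repr K G x z - eval_repr K F x z) (\<lambda>z. eval_repr K G x z - eval_repr K F x z))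
         = Re (Kinv K G x x) - Re (Kinv K F x x)"
proof -
  have "finite F" "x \<in> G" using assms finite_subset by auto
  have "gram_form K G (eval_repr K F x) (eval_repr K F x) = cnj (Kinv K F x x)"
    using gram_form_superset[OF assms(3,4)] gram_form_eval_repr_self[OF assms(1) \<open>finite F\<close> assms(5)]
    by simp
  moreover have "gram_form K G (eval_repr K F x) (eval_repr K G x) = cnj (Kinv K F x x)"
    using gram_form_eval_repr[OF assms(2,3) \<open>x \<in> G\<close>] assms(5) by (simp add: eval_repr_def restr_def)
  moreover have "gram_form K G (eval_repr K G x) (eval_repr K G x) = cnj (Kinv K G x x)"
    by (rule gram_form_eval_repr_self[OF assms(2,3) \<open>x \<in> G\<close>])
  ultimately show ?thesis
    by (simp add: gram_form_diff_diff gram_form_commute[of G "eval_repr K G x" "eval_repr K F x"])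
qed

lemma Kinv_diag_mono:
  assumes "Kmat_invertible K F" "Kmat_invertible K G" "finite G" "F \<subseteq> G" "x \<in> F"
  shows "Re (Kinv K F x x) \<le> Re (Kinv K G x x)"
  using gram_form_eval_repr_diff[OF assms] gram_form_self_nonneg[OF assms(3)] by (metis diff_ge_0_iff_ge)

lemma approx_seq_delta_qform_eventually_gt:
  assumes "approx_seq K (delta x) S c" "Kmat_invertible K F" "finite F" "x \<in> F"
    and "a < Re (Kinv K F x x)"
  shows "eventually (\<lambda>n. a < Re (qform K (S n) (c n))) sequentially"
proof -
  define m where "m = Re (Kinv K F x x)"
  define g where "g = eval_repr K F x"
  define f where "f n = restr (S n) (c n)" for n
  define \<beta> where "\<beta> = (\<lambda>n. gram_form K (F \<union> S n) g (f n))"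
  have "\<beta> \<longlonglongrightarrow> cnj (restr F (\<lambda>z. Kinv K F z x) x)"
    unfolding \<beta>_def f_def g_def eval_repr_def by (rule approx_seq_delta_gram_form_tendsto[OF assms(1,3)])
  moreover have "restr F (\<lambda>z. Kinv K F z x) x = Kinv K F x x"
    using assms(4) by (simp add: restr_def)
  ultimately have "\<beta> \<longlonglongrightarrow> cnj (Kinv K F x x)"
    by (simp only:)
  then have "(\<lambda>n. Re (\<beta> n)) \<longlonglongrightarrow> m"
    unfolding m_def using tendsto_Re by fastforce
  then have "(\<lambda>n. 2 * Re (\<beta> n) - m) \<longlonglongrightarrow> 2 * m - m"
    by (intro tendsto_intros)
  then have "eventually (\<lambda>n. a < 2 * Re (\<beta> n) - m) sequentially"
    using assms(5) by (intro order_tendstoD(1)) (auto simp: m_def)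
  moreover have "2 * Re (\<beta> n) - m \<le> Re (qform K (S n) (c n))" for n
  proof -
    have fin: "finite (F \<union> S n)"
      using assms(1,3) by (simp add: approx_seq_def)
    have "gram_form K (F \<union> S n) (f n) (f n) = qform K (S n) (c n)"
      unfolding f_def by (rule gram_form_restr_superset[OF fin]) auto
    moreover have "gram_form K (F \<union> S n) g g = cnj (Kinv K F x x)"
      using gram_form_superset[OF fin, of F g g] gram_form_eval_repr_self[OF assms(2-4)]
      by (simp add: g_def)
    moreover have "0 \<le> Re (gram_form K (F \<union> S n) (\<lambda>z. f n z - g z) (\<lambda>z. f n z - g z))"
      by (rule gram_form_self_nonneg[OF fin])
    ultimately show ?thesis
      by (simp add: gram_form_diff_diff gram_form_commute[of _ "f n" g] \<beta>_def m_def)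
  qed
  ultimately show ?thesis
    by (simp add: eventually_mono order_less_le_trans)
qed

lemma approx_seq_qform_eventually_bounded:
  assumes "approx_seq K f S c"
  shows "\<exists>C. eventually (\<lambda>n. Re (qform K (S n) (c n)) \<le> C) sequentially"
proof -
  have fin: "finite (S n)" for n
    using assms by (simp add: approx_seq_def)
  obtain N where N: "\<And>m n. m \<ge> N \<Longrightarrow> n \<ge> N \<Longrightarrow> diff_norm2 K (S m) (c m) (S n) (c n) < 1"
    using assms unfolding approx_seq_def by (meson zero_less_one)
  have "Re (qform K (S n) (c n)) \<le> 2 * Re (qform K (S N) (c N)) + 2" if "n \<ge> N" for n
  proof -
    have "finite (S n \<union> S N)"
      using fin by simp
    from gram_form_le_parallelogram[OF this, of "restr (S n) (c n)" "restr (S N) (c N)"]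
    have "Re (qform K (S n) (c n)) \<le> 2 * Re (qform K (S N) (c N)) + 2 * diff_norm2 K (S n) (c n) (S N) (c N)"
      using fin by (simp add: gram_form_restr_superset diff_norm2_eq_gram_form)
    then show ?thesis
      using N[OF that order.refl] by linarith
  qed
  then show ?thesis
    unfolding eventually_sequentially by blast
qed

lemma qform_minus_gram_form_bound:
  assumes "finite S" "finite T"
  shows "(cmod (qform K S c - gram_form K (S \<union> T) (restr S c) (restr T d)))\<^sup>2
         \<le> Re (qform K S c) * diff_norm2 K S c T d"
proof -
  have fin: "finite (S \<union> T)"
    using assms by simp
  have ff: "gram_form K (S \<union> T) (restr S c) (restr S c) = qform K S c"
    by (rule gram_form_restr_superset[OF fin]) simp
  then have "qform K S c - gram_form K (S \<union> T) (restr S c) (restr T d)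
      = gram_form K (S \<union> T) (restr S c) (\<lambda>z. restr S c z - restr T d z)"
    by (simp add: gram_form_diff_right)
  then show ?thesis
    using gram_form_Cauchy_Schwarz[OF fin, of "restr S c"] ff by (simp add: diff_norm2_eq_gram_form)
qed

lemma restr_point_bound:
  assumes "finite S" "Kmat_invertible K (insert x S)"
  shows "(cmod (restr S c x))\<^sup>2 \<le> Re (qform K S c) * Re (Kinv K (insert x S) x x)"
proof -
  have fin: "finite (insert x S)"
    using assms(1) by simp
  have "gram_form K (insert x S) (restr S c) (eval_repr K (insert x S) x) = cnj (restr S c x)"
    by (rule gram_form_eval_repr[OF assms(2) fin]) simp
  with gram_form_Cauchy_Schwarz[OF fin, of "restr S c" "eval_repr K (insert x S) x"]
  show ?thesis
    by (simp add: gram_form_restr_superset[OF fin subset_insertI] gram_form_eval_repr_self[OF assms(2) fin])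
qed

end

locale strictly_pd_kernel = pd_kernel +
  assumes Kmat_invertible: "finite F \<Longrightarrow> Kmat_invertible K F"
begin

lemma bdd_above_Kinv_diag_if_approx_seq:
  assumes "approx_seq K (delta x) S c"
  shows "bdd_above {Re (Kinv K F x x) | F. finite F \<and> x \<in> F}"
proof -
  obtain C where C: "eventually (\<lambda>n. Re (qform K (S n) (c n)) \<le> C) sequentially"
    using approx_seq_qform_eventually_bounded[OF assms] by blast
  have "Re (Kinv K F x x) \<le> C" if "finite F" "x \<in> F" for F
  proof (rule ccontr)
    assume "\<not> Re (Kinv K F x x) \<le> C"
    then have "C < Re (Kinv K F x x)" by simp
    from approx_seq_delta_qform_eventually_gt[OF assms Kmat_invertible[OF that(1)] that this] C
    have "eventually (\<lambda>n. False) sequentially"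
      by eventually_elim simp
    then show False by simp
  qed
  then show ?thesis
    unfolding bdd_above_def by blast
qed

lemma Kinv_diag_bound_nonneg:
  assumes "\<And>F. finite F \<Longrightarrow> x \<in> F \<Longrightarrow> Re (Kinv K F x x) \<le> s"
  shows "0 \<le> s"
  using Kinv_diag_nonneg[OF Kmat_invertible, of "{x}" x] assms[of "{x}"] by simp

lemma qform_le_if_Cauchy_tail:
  assumes "approx_seq K (delta x) S c"
    and bound: "\<And>F. finite F \<Longrightarrow> x \<in> F \<Longrightarrow> Re (Kinv K F x x) \<le> s"
    and tail: "\<And>n. n \<ge> N \<Longrightarrow> diff_norm2 K (S m) (c m) (S n) (c n) \<le> \<delta>"
  shows "Re (qform K (S m) (c m)) \<le> (sqrt s + sqrt \<delta>)\<^sup>2"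
proof -
  have fin: "finite (S n)" for n
    using assms(1) by (simp add: approx_seq_def)
  define q where "q = Re (qform K (S m) (c m))"
  define \<alpha> where "\<alpha> = cnj (restr (S m) (c m) x)"
  have "q \<ge> 0"
    using qform_nonneg[OF fin] by (simp add: q_def)
  have qform_q: "qform K (S m) (c m) = of_real q"
    using qform_real[OF fin] by (simp add: q_def complex_eq_iff)
  have "(cmod \<alpha>)\<^sup>2 \<le> q * s"
    using restr_point_bound[OF fin Kmat_invertible[of "insert x (S m)"], of "c m"] bound[of "insert x (S m)"]
      fin \<open>q \<ge> 0\<close>
    by (simp add: \<alpha>_def q_def) (meson mult_left_mono order_trans)
  then have \<alpha>_bound: "cmod \<alpha> \<le> sqrt q * sqrt s"
    by (metis real_le_rsqrt real_sqrt_mult)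
  \<comment> \<open>Pair the m-th term with the later ones: the pairings tend to \<open>\<alpha>\<close>, and by Cauchy--Schwarz
    they stay within \<open>sqrt (q \<delta>)\<close> of \<open>q\<close>.\<close>
  define \<beta> where "\<beta> = (\<lambda>n. gram_form K (S m \<union> S n) (restr (S m) (c m)) (restr (S n) (c n)))"
  have "\<beta> \<longlonglongrightarrow> \<alpha>"
    unfolding \<beta>_def \<alpha>_def by (rule approx_seq_delta_gram_form_tendsto[OF assms(1) fin])
  moreover have "cmod (of_real q - \<beta> n) \<le> sqrt q * sqrt \<delta>" if "n \<ge> N" for n
  proof -
    have "(cmod (of_real q - \<beta> n))\<^sup>2 \<le> q * diff_norm2 K (S m) (c m) (S n) (c n)"
      using qform_minus_gram_form_bound[OF fin[of m] fin[of n], of "c m" "c n"] by (simp add: qform_q \<beta>_def)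
    also have "\<dots> \<le> q * \<delta>"
      using tail[OF that] \<open>q \<ge> 0\<close> by (rule mult_left_mono)
    finally show ?thesis
      by (metis real_le_rsqrt real_sqrt_mult)
  qed
  ultimately have "cmod (of_real q - \<alpha>) \<le> sqrt q * sqrt \<delta>"
    by (intro tendsto_upperbound[of "\<lambda>n. cmod (of_real q - \<beta> n)"] tendsto_intros)
      (auto simp: eventually_sequentially intro!: exI[of _ N])
  then have "q \<le> sqrt q * (sqrt s + sqrt \<delta>)"
    using \<alpha>_bound complex_Re_le_cmod[of \<alpha>] complex_Re_le_cmod[of "of_real q - \<alpha>"]
    by (simp add: distrib_left)
  then have "q \<le> (sqrt s + sqrt \<delta>)\<^sup>2"
    by (rule le_power2_if_le_sqrt_mult)
  then show ?thesis
    by (simp add: q_def)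
qed

lemma approx_seq_delta_qform_eventually_le:
  assumes "approx_seq K (delta x) S c"
    and "\<And>F. finite F \<Longrightarrow> x \<in> F \<Longrightarrow> Re (Kinv K F x x) \<le> s"
    and "\<delta> > 0"
  shows "eventually (\<lambda>m. Re (qform K (S m) (c m)) \<le> (sqrt s + sqrt \<delta>)\<^sup>2) sequentially"
proof -
  obtain N where N: "\<And>m n. m \<ge> N \<Longrightarrow> n \<ge> N \<Longrightarrow> diff_norm2 K (S m) (c m) (S n) (c n) < \<delta>"
    using assms(1,3) unfolding approx_seq_def by meson
  have "Re (qform K (S m) (c m)) \<le> (sqrt s + sqrt \<delta>)\<^sup>2" if "m \<ge> N" for m
  proof (rule qform_le_if_Cauchy_tail[OF assms(1,2)])
    show "diff_norm2 K (S m) (c m) (S n) (c n) \<le> \<delta>" if "n \<ge> N" for n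
      using N[OF \<open>m \<ge> N\<close> that] by simp
  qed
  then show ?thesis
    unfolding eventually_sequentially by blast
qed

lemma approx_seq_delta_qform_tendsto:
  assumes "approx_seq K (delta x) S c"
  shows "(\<lambda>n. Re (qform K (S n) (c n))) \<longlonglongrightarrow> Sup {Re (Kinv K F x x) | F. finite F \<and> x \<in> F}"
    (is "_ \<longlonglongrightarrow> Sup ?A")
proof (rule order_tendstoI)
  have "bdd_above ?A" "?A \<noteq> {}"
    using bdd_above_Kinv_diag_if_approx_seq[OF assms] by auto
  then have upper: "Re (Kinv K F x x) \<le> Sup ?A" if "finite F" "x \<in> F" for F
    using that by (intro cSup_upper) auto
  fix a
  show "eventually (\<lambda>n. a < Re (qform K (S n) (c n))) sequentially" if "a < Sup ?A"
  proof -
    obtain F where "finite F" "x \<in> F" "a < Re (Kinv K F x x)"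
      using less_cSupD[OF \<open>?A \<noteq> {}\<close> \<open>a < Sup ?A\<close>] by blast
    then show ?thesis
      by (intro approx_seq_delta_qform_eventually_gt[OF assms Kmat_invertible])
  qed
  show "eventually (\<lambda>n. Re (qform K (S n) (c n)) < a) sequentially" if "Sup ?A < a"
  proof -
    have "((\<lambda>\<delta>. (sqrt (Sup ?A) + sqrt \<delta>)\<^sup>2) \<longlongrightarrow> (sqrt (Sup ?A) + sqrt 0)\<^sup>2) (at_right 0)"
      by (intro tendsto_intros)
    moreover have "(sqrt (Sup ?A) + sqrt 0)\<^sup>2 = Sup ?A"
      using Kinv_diag_bound_nonneg[OF upper] by simp
    ultimately have "eventually (\<lambda>\<delta>. (sqrt (Sup ?A) + sqrt \<delta>)\<^sup>2 < a \<and> \<delta> > 0) (at_right 0)"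
      using that by (intro eventually_conj order_tendstoD(2) eventually_at_right_less) auto
    then obtain \<delta> where \<delta>: "(sqrt (Sup ?A) + sqrt \<delta>)\<^sup>2 < a" "\<delta> > 0"
      using eventually_happens'[OF trivial_limit_at_right_real] by blast
    have "eventually (\<lambda>n. Re (qform K (S n) (c n)) \<le> (sqrt (Sup ?A) + sqrt \<delta>)\<^sup>2) sequentially"
      by (intro approx_seq_delta_qform_eventually_le[OF assms _ \<delta>(2)] upper)
    then show ?thesis
      by eventually_elim (use \<delta>(1) in linarith)
  qed
qed

lemma diff_norm2_eval_repr:
  assumes "finite G" "F \<subseteq> G" "x \<in> F"
  shows "diff_norm2 K F (eval_repr K F x) G (eval_repr K G x) = Re (Kinv K G x x) - Re (Kinv K F x x)"
proof -
  have "finite F"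
    using assms(1,2) finite_subset by blast
  have "F \<union> G = G"
    using assms(2) by blast
  then show ?thesis
    using gram_form_eval_repr_diff[OF Kmat_invertible[OF \<open>finite F\<close>] Kmat_invertible[OF assms(1)] assms]
    by (simp add: diff_norm2_eq_gram_form gram_form_diff_commute[of K G "eval_repr K F x"])
qed

lemma kfun_eval_repr_error:
  assumes "finite F" "x \<in> F" "\<And>H. finite H \<Longrightarrow> x \<in> H \<Longrightarrow> Re (Kinv K H x x) \<le> s"
  shows "(cmod (kfun K F (eval_repr K F x) y - delta x y))\<^sup>2 \<le> (s - Re (Kinv K F x x)) * Re (K y y)"
proof -
  define H where "H = insert y F"
  have H: "finite H" "F \<subseteq> H" "x \<in> H" "y \<in> H"
    using assms(1,2) by (auto simp: H_def)
  \<comment> \<open>On the larger set \<open>H \<ni> y\<close> the representer of evaluation at \<open>x\<close> reproduces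
    \<open>delta x y\<close> exactly.\<close>
  have "kfun K F (eval_repr K F x) y - delta x y
      = kfun K H (\<lambda>z. eval_repr K F x z - eval_repr K H x z) y"
    using kfun_superset[OF H(1,2), of "eval_repr K F x" K] kfun_eval_repr[OF Kmat_invertible H(3,4)] H(1)
    by (simp add: kfun_diff)
  then have "(cmod (kfun K F (eval_repr K F x) y - delta x y))\<^sup>2
      \<le> (Re (Kinv K H x x) - Re (Kinv K F x x)) * Re (K y y)"
    using kfun_point_bound[OF H(1,4), of "\<lambda>z. eval_repr K F x z - eval_repr K H x z"]
      gram_form_eval_repr_diff[OF Kmat_invertible[OF assms(1)] Kmat_invertible[OF H(1)] H(1,2) assms(2)]
    by (simp add: gram_form_diff_commute[of K H "eval_repr K F x"])
  also have "\<dots> \<le> (s - Re (Kinv K F x x)) * Re (K y y)"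
    using assms(3)[OF H(1,3)] diag_nonneg by (simp add: mult_right_mono)
  finally show ?thesis .
qed

lemma exists_incseq_Kinv_diag_tendsto_Sup:
  assumes "bdd_above {Re (Kinv K F x x) | F. finite F \<and> x \<in> F}" (is "bdd_above ?A")
  obtains G where "\<And>n. finite (G n)" "\<And>n. x \<in> G n" "incseq G"
    "(\<lambda>n. Re (Kinv K (G n) x x)) \<longlonglongrightarrow> Sup ?A"
proof -
  have "?A \<noteq> {}" by auto
  have "\<exists>F. finite F \<and> x \<in> F \<and> Sup ?A - inverse (real (Suc n)) < Re (Kinv K F x x)" for n
    using less_cSupD[OF \<open>?A \<noteq> {}\<close>, of "Sup ?A - inverse (real (Suc n))"] by auto
  then obtain F where F: "\<And>n. finite (F n) \<and> x \<in> F n \<and> Sup ?A - inverse (real (Suc n)) < Re (Kinv K (F n) x x)"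
    using choice[of "\<lambda>n F. finite F \<and> x \<in> F \<and> Sup ?A - inverse (real (Suc n)) < Re (Kinv K F x x)"] by blast
  define G where "G n = (\<Union>k\<le>n. F k)" for n
  have G: "finite (G n)" "x \<in> G n" "F n \<subseteq> G n" for n
    using F by (auto simp: G_def)
  have "incseq G"
    by (force simp: G_def incseq_def)
  moreover have "(\<lambda>n. Re (Kinv K (G n) x x)) \<longlonglongrightarrow> Sup ?A"
  proof (rule tendsto_sandwich)
    show "eventually (\<lambda>n. Sup ?A - inverse (real (Suc n)) \<le> Re (Kinv K (G n) x x)) sequentially"
      using F Kinv_diag_mono[OF Kmat_invertible Kmat_invertible G(1) G(3)] G(1)
      by (intro always_eventually allI) (meson order_less_le_trans less_imp_le)
    show "eventually (\<lambda>n. Re (Kinv K (G n) x x) \<le> Sup ?A) sequentially"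
      using assms G(1,2) by (intro always_eventually allI cSup_upper) auto
    show "(\<lambda>n. Sup ?A - inverse (real (Suc n))) \<longlonglongrightarrow> Sup ?A"
      using tendsto_diff[OF tendsto_const LIMSEQ_inverse_real_of_nat, of "Sup ?A"] by simp
  qed simp
  ultimately show ?thesis
    using that G(1,2) by blast
qed

lemma eval_repr_Cauchy:
  assumes G: "\<And>n. finite (G n)" "\<And>n. x \<in> G n" "incseq G"
    and upper: "\<And>F. finite F \<Longrightarrow> x \<in> F \<Longrightarrow> Re (Kinv K F x x) \<le> s"
    and lim: "(\<lambda>n. Re (Kinv K (G n) x x)) \<longlonglongrightarrow> s"
    and "e > 0"
  shows "\<exists>N. \<forall>k\<ge>N. \<forall>n\<ge>N. diff_norm2 K (G k) (eval_repr K (G k) x) (G n) (eval_repr K (G n) x) < e"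
proof -
  have "eventually (\<lambda>n. s - e < Re (Kinv K (G n) x x)) sequentially"
    using order_tendstoD(1)[OF lim, of "s - e"] \<open>e > 0\<close> by simp
  then obtain N where N: "\<And>n. n \<ge> N \<Longrightarrow> s - e < Re (Kinv K (G n) x x)"
    unfolding eventually_sequentially by blast
  have ordered: "diff_norm2 K (G k) (eval_repr K (G k) x) (G n) (eval_repr K (G n) x) < e"
    if "k \<le> n" "k \<ge> N" for k n
    using diff_norm2_eval_repr[OF G(1) monoD[OF \<open>incseq G\<close> \<open>k \<le> n\<close>] G(2)] N[OF \<open>k \<ge> N\<close>]
      upper[OF G(1,2), of n] by simp
  have "diff_norm2 K (G k) (eval_repr K (G k) x) (G n) (eval_repr K (G n) x) < e"
    if "k \<ge> N" "n \<ge> N" for k n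
  proof (cases "k \<le> n")
    case True
    then show ?thesis using ordered that by blast
  next
    case False
    then show ?thesis using ordered[of n k] that diff_norm2_commute[of K "G k"] by simp
  qed
  then show ?thesis
    by blast
qed

lemma kfun_eval_repr_tendsto_delta:
  assumes G: "\<And>n. finite (G n)" "\<And>n. x \<in> G n"
    and upper: "\<And>F. finite F \<Longrightarrow> x \<in> F \<Longrightarrow> Re (Kinv K F x x) \<le> s"
    and lim: "(\<lambda>n. Re (Kinv K (G n) x x)) \<longlonglongrightarrow> s"
  shows "(\<lambda>n. kfun K (G n) (eval_repr K (G n) x) y) \<longlonglongrightarrow> delta x y"
proof -
  define err where "err n = kfun K (G n) (eval_repr K (G n) x) y - delta x y" for n
  have "(\<lambda>n. (cmod (err n))\<^sup>2) \<longlonglongrightarrow> 0"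
  proof (rule tendsto_sandwich[of "\<lambda>_. 0" _ _ "\<lambda>n. (s - Re (Kinv K (G n) x x)) * Re (K y y)"])
    show "eventually (\<lambda>n. (cmod (err n))\<^sup>2 \<le> (s - Re (Kinv K (G n) x x)) * Re (K y y)) sequentially"
      unfolding err_def by (intro always_eventually allI kfun_eval_repr_error[OF G upper])
    have "(\<lambda>n. (s - Re (Kinv K (G n) x x)) * Re (K y y)) \<longlonglongrightarrow> (s - s) * Re (K y y)"
      by (intro tendsto_intros lim)
    then show "(\<lambda>n. (s - Re (Kinv K (G n) x x)) * Re (K y y)) \<longlonglongrightarrow> 0"
      by simp
  qed simp_all
  then have "(\<lambda>n. sqrt ((cmod (err n))\<^sup>2)) \<longlonglongrightarrow> sqrt 0"
    by (rule tendsto_real_sqrt)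
  then have "err \<longlonglongrightarrow> 0"
    by (simp add: tendsto_norm_zero_iff)
  then show ?thesis
    unfolding err_def by (rule LIM_zero_cancel)
qed

lemma in_RKHS_delta_if_bdd_above:
  assumes "bdd_above {Re (Kinv K F x x) | F. finite F \<and> x \<in> F}" (is "bdd_above ?A")
  shows "in_RKHS K (delta x)"
proof -
  obtain G where G: "\<And>n. finite (G n)" "\<And>n. x \<in> G n" "incseq G"
    and lim: "(\<lambda>n. Re (Kinv K (G n) x x)) \<longlonglongrightarrow> Sup ?A"
    using exists_incseq_Kinv_diag_tendsto_Sup[OF assms] by blast
  have upper: "Re (Kinv K F x x) \<le> Sup ?A" if "finite F" "x \<in> F" for F
    using assms that by (intro cSup_upper) auto
  have "approx_seq K (delta x) G (\<lambda>n. eval_repr K (G n) x)"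
    unfolding approx_seq_def
    using G(1) eval_repr_Cauchy[OF G upper lim] kfun_eval_repr_tendsto_delta[OF G(1,2) upper lim]
    by blast
  then show ?thesis
    unfolding in_RKHS_def by blast
qed

end

theorem corollary8p7:
  fixes K :: "'a \<Rightarrow> 'a \<Rightarrow> complex" and x :: 'a
  assumes "pos_def_kernel K"
    and "\<And>F. finite F \<Longrightarrow> Kmat_invertible K F"
  shows "(in_RKHS K (delta x) \<longleftrightarrow> bdd_above {Re (Kinv K F x x) | F. finite F \<and> x \<in> F}) \<and>
         (in_RKHS K (delta x) \<longrightarrow>
           RKHS_norm2 K (delta x) = Sup {Re (Kinv K F x x) | F. finite F \<and> x \<in> F})"
proof -
  interpret strictly_pd_kernel K
    using assms by unfold_locales
  have "in_RKHS K (delta x) \<longleftrightarrow> bdd_above {Re (Kinv K F x x) | F. finite F \<and> x \<in> F}"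
  proof
    assume "in_RKHS K (delta x)"
    then obtain S c where "approx_seq K (delta x) S c"
      unfolding in_RKHS_def by blast
    then show "bdd_above {Re (Kinv K F x x) | F. finite F \<and> x \<in> F}"
      by (rule bdd_above_Kinv_diag_if_approx_seq)
  qed (rule in_RKHS_delta_if_bdd_above)
  moreover have "RKHS_norm2 K (delta x) = Sup {Re (Kinv K F x x) | F. finite F \<and> x \<in> F}"
    if "in_RKHS K (delta x)"
    using that approx_seq_delta_qform_tendsto by (rule RKHS_norm2_eqI)
  ultimately show ?thesis
    by blast
qed

end
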